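(* Let $g:\mathbb{F}_{2^n}\to\mathbb{F}_2$ and let $u_1,\ldots,u_\tau$ be pairwise distinct elements of $\mathbb{F}_{2^n}$. The following are equivalent: 1) $D_{u_i}D_{u_j}g(x)=0$ for all $x$ and all $1\le i<j\le\tau$ (i.e. $g$ satisfies property $(\mathbf{P}_\tau)$ with defining set $\{u_1,\ldots,u_\tau\}$); 2) there exist Boolean functions $g_1,\ldots,g_\tau$ on $\mathbb{F}_{2^n}$ such that $g(x+\sum_{i=1}^\tau w_iu_i)=g(x)+\sum_{i=1}^\tau w_ig_i(x)$ for all $x\in\mathbb{F}_{2^n}$ and all $w=(w_1,\ldots,w_\tau)\in\mathbb{F}_2^\tau$. Moreover, if these hold, then the functions $g_i$ in 2) are exactly $g_i=D_{u_i}g$, $i=1,\ldots,\tau$.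
   Context: $D_ag(x)=g(x)+g(x+a)$; $D_aD_bg(x)=g(x)+g(x+a)+g(x+b)+g(x+a+b)$. A Boolean function $g$ satisfies property $(\mathbf{P}_\tau)$ with defining set $\{u_1,\ldots,u_\tau\}$ if $u_1,\ldots,u_\tau$ are pairwise distinct and $D_{u_i}D_{u_j}g=0$ for all $1\le i<j\le\tau$. *)

theory Defs
  imports Main "HOL-Library.Z2" "HOL-Number_Theory.Residues"
begin

definition D :: "'a::field \<Rightarrow> ('a \<Rightarrow> bit) \<Rightarrow> 'a \<Rightarrow> bit" where
  "D a g x = g x + g (x + a)"

definition DD :: "'a::field \<Rightarrow> 'a \<Rightarrow> ('a \<Rightarrow> bit) \<Rightarrow> 'a \<Rightarrow> bit" where
  "DD a b g x = g x + g (x + a) + g (x + b) + g (x + a + b)"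

definition prop_P :: "nat \<Rightarrow> ('a::field \<Rightarrow> bit) \<Rightarrow> (nat \<Rightarrow> 'a) \<Rightarrow> bool" where
  "prop_P \<tau> g u \<longleftrightarrow> inj_on u {1..\<tau>} \<and>
     (\<forall>i j. 1 \<le> i \<longrightarrow> i < j \<longrightarrow> j \<le> \<tau> \<longrightarrow> (\<forall>x. DD (u i) (u j) g x = 0))"

end

theory Submission
  imports Defs
begin

text \<open>
  Write \<open>g (x + a) = g x + D a g x\<close>. The condition \<open>DD a b g = 0\<close> says exactly that \<open>D a g\<close>
  is \<open>b\<close>-periodic, so under property (P) every derivative \<open>D (u i) g\<close> is invariant under
  translation by the sum of any set of the other \<open>u j\<close>. Adding the \<open>u i\<close> of a set \<open>S\<close> one at a
  time then gives \<open>g (x + \<Sum>S u) = g x + \<Sum>i\<in>S. D (u i) g x\<close>, the expansion with \<open>G i = D (u i) g\<close>.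
  Conversely, choosing for \<open>w\<close> the indicator of a singleton \<open>{i}\<close> forces \<open>G i = D (u i) g\<close>,
  and that of a pair \<open>{i, j}\<close> then gives \<open>DD (u i) (u j) g = 0\<close>.
\<close>

declare add_bit_eq_xor [simp del] mult_bit_eq_and [simp del]

lemma bit_add_self [simp]: "(b::bit) + b = 0"
  by (cases b) simp_all

lemma bit_add_cancel_left [simp]: "(a::bit) + (a + b) = b"
  by (simp flip: add.assoc)

lemma bit_add_eq_0_iff: "(a::bit) + b = 0 \<longleftrightarrow> a = b"
  by (metis bit_add_cancel_left bit_add_self)

lemma shift_eq_add_D: "g (x + a) = g x + D a g x"
  unfolding D_def by simp

lemma DD_eq_D_add_D: "DD a b g x = D a g x + D a g (x + b)"
  unfolding DD_def D_def by (simp add: algebra_simps)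

lemma DD_commute: "DD a b g = DD b a g"
  unfolding DD_def by (auto simp: algebra_simps)

lemma DD_eq_0_iff_D_periodic: "DD a b g x = 0 \<longleftrightarrow> D a g (x + b) = D a g x"
  unfolding DD_eq_D_add_D bit_add_eq_0_iff by auto

lemma D_add_sum_periodic:
  assumes "finite S" and "\<And>b y. b \<in> S \<Longrightarrow> D a g (y + u b) = D a g y"
  shows "D a g (x + sum u S) = D a g x"
  using assms
proof (induction S arbitrary: x rule: finite_induct)
  case (insert c S)
  then have "D a g (x + sum u (insert c S)) = D a g ((x + sum u S) + u c)"
    by (simp add: algebra_simps)
  also have "\<dots> = D a g x"
    using insert by simp
  finally show ?case .
qed simp

lemma shift_sum_eq_add_sum_D:
  assumes "finite S"
    and "\<And>i j y. i \<in> S \<Longrightarrow> j \<in> S \<Longrightarrow> i \<noteq> j \<Longrightarrow> DD (u i) (u j) g y = 0"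
  shows "g (x + sum u S) = g x + (\<Sum>i\<in>S. D (u i) g x)"
  using assms
proof (induction S arbitrary: x rule: finite_induct)
  case (insert c S)
  have "D (u c) g (y + u b) = D (u c) g y" if "b \<in> S" for b y
    using insert.hyps(2) insert.prems[of c b y] that by (auto simp: DD_eq_0_iff_D_periodic)
  then have periodic: "D (u c) g (x + sum u S) = D (u c) g x"
    using D_add_sum_periodic[OF insert.hyps(1)] by blast
  have "g (x + sum u (insert c S)) = g ((x + sum u S) + u c)"
    using insert.hyps by (simp add: algebra_simps)
  also have "\<dots> = g (x + sum u S) + D (u c) g x"
    by (simp only: shift_eq_add_D[of g "x + sum u S" "u c"] periodic)
  also have "\<dots> = g x + (\<Sum>i\<in>insert c S. D (u i) g x)"
    using insert by (simp add: algebra_simps)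
  finally show ?case .
qed simp

lemma prop_P_DD_eq_0:
  assumes "prop_P \<tau> g u" and "i \<in> {1..\<tau>}" "j \<in> {1..\<tau>}" "i \<noteq> j"
  shows "DD (u i) (u j) g x = 0"
proof (cases "i < j")
  case False
  then have "DD (u j) (u i) g x = 0"
    using assms unfolding prop_P_def by auto
  then show ?thesis
    by (simp add: DD_commute)
qed (use assms in \<open>auto simp: prop_P_def\<close>)

lemma sum_of_bit_mult:
  assumes "finite A"
  shows "(\<Sum>i\<in>A. of_bit (w i) * (f i :: 'b::semiring_1)) = sum f {i \<in> A. w i = 1}"
proof -
  have "(\<Sum>i\<in>A. of_bit (w i) * f i) = (\<Sum>i\<in>A. if w i = 1 then f i else 0)"
    by (rule sum.cong) (cases "w i"; simp)+
  then show ?thesis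
    using assms by (simp add: sum.inter_filter)
qed

lemma sum_bit_mult:
  assumes "finite A"
  shows "(\<Sum>i\<in>A. w i * (f i :: bit)) = sum f {i \<in> A. w i = 1}"
proof -
  have "(\<Sum>i\<in>A. w i * f i) = (\<Sum>i\<in>A. of_bit (w i) * f i)"
    by (rule sum.cong) (cases "w i"; simp)+
  then show ?thesis
    using sum_of_bit_mult[OF assms] by simp
qed

definition shift_expansion :: "nat \<Rightarrow> ('a::field \<Rightarrow> bit) \<Rightarrow> (nat \<Rightarrow> 'a) \<Rightarrow> (nat \<Rightarrow> 'a \<Rightarrow> bit) \<Rightarrow> bool"
  where "shift_expansion \<tau> g u G \<longleftrightarrow> (\<forall>x. \<forall>w :: nat \<Rightarrow> bit.
      g (x + (\<Sum>i=1..\<tau>. of_bit (w i) * u i)) = g x + (\<Sum>i=1..\<tau>. w i * G i x))"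

lemma shift_expansion_on_subset:
  assumes "shift_expansion \<tau> g u G"
    and "S \<subseteq> {1..\<tau>}"
  shows "g (x + sum u S) = g x + (\<Sum>i\<in>S. G i x)"
proof -
  define w :: "nat \<Rightarrow> bit" where "w i = of_bool (i \<in> S)" for i
  have support: "{i \<in> {1..\<tau>}. w i = 1} = S"
    using assms(2) by (auto simp: w_def)
  have "g (x + (\<Sum>i=1..\<tau>. of_bit (w i) * u i)) = g x + (\<Sum>i=1..\<tau>. w i * G i x)"
    using assms(1) unfolding shift_expansion_def by blast
  then show ?thesis
    unfolding sum_of_bit_mult[OF finite_atLeastAtMost] sum_bit_mult[OF finite_atLeastAtMost] support .
qed

lemma shift_expansion_coeff_eq_D:
  assumes "shift_expansion \<tau> g u G"
    and "i \<in> {1..\<tau>}"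
  shows "G i = D (u i) g"
proof
  fix x
  have "g (x + u i) = g x + G i x"
    using shift_expansion_on_subset[OF assms(1), of "{i}"] assms(2) by simp
  then show "G i x = D (u i) g x"
    using shift_eq_add_D[of g x "u i"] by simp
qed

lemma shift_expansion_imp_DD_eq_0:
  assumes expansion: "shift_expansion \<tau> g u G"
    and "i \<in> {1..\<tau>}" "j \<in> {1..\<tau>}" "i \<noteq> j"
  shows "DD (u i) (u j) g x = 0"
proof -
  have single: "g (x + u k) = g x + G k x" if "k \<in> {1..\<tau>}" for k
    using shift_expansion_on_subset[OF expansion, of "{k}" x] that by simp
  have pair: "g (x + u i + u j) = g x + (G i x + G j x)"
    using shift_expansion_on_subset[OF expansion, of "{i, j}" x] assms(2-4) by (simp add: add.assoc)
  show ?thesis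
    unfolding DD_def single[OF assms(2)] single[OF assms(3)] pair
    by (cases "g x"; cases "G i x"; cases "G j x") simp_all
qed

lemma prop_P_imp_shift_expansion_D:
  assumes "prop_P \<tau> g u"
  shows "shift_expansion \<tau> g u (\<lambda>i. D (u i) g)"
  unfolding shift_expansion_def
proof (intro allI)
  fix x and w :: "nat \<Rightarrow> bit"
  have "g (x + sum u {i \<in> {1..\<tau>}. w i = 1}) = g x + (\<Sum>i \<in> {i \<in> {1..\<tau>}. w i = 1}. D (u i) g x)"
    using assms by (intro shift_sum_eq_add_sum_D) (auto intro: prop_P_DD_eq_0)
  then show "g (x + (\<Sum>i=1..\<tau>. of_bit (w i) * u i)) = g x + (\<Sum>i=1..\<tau>. w i * D (u i) g x)"
    unfolding sum_of_bit_mult[OF finite_atLeastAtMost] sum_bit_mult[OF finite_atLeastAtMost] .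
qed

text \<open>The injectivity of \<open>u\<close> only enters through the definition of \<open>prop_P\<close>.\<close>

theorem lemma3:
  fixes n \<tau> :: nat and g :: "'a::{field,finite} \<Rightarrow> bit" and u :: "nat \<Rightarrow> 'a"
  assumes "card (UNIV :: 'a set) = 2 ^ n"
    and "inj_on u {1..\<tau>}"
  shows "(prop_P \<tau> g u \<longleftrightarrow>
           (\<exists>G :: nat \<Rightarrow> 'a \<Rightarrow> bit. \<forall>x. \<forall>w :: nat \<Rightarrow> bit.
              g (x + (\<Sum>i=1..\<tau>. of_bit (w i) * u i)) = g x + (\<Sum>i=1..\<tau>. w i * G i x)))
       \<and> (\<forall>G :: nat \<Rightarrow> 'a \<Rightarrow> bit.
           (\<forall>x. \<forall>w :: nat \<Rightarrow> bit.
              g (x + (\<Sum>i=1..\<tau>. of_bit (w i) * u i)) = g x + (\<Sum>i=1..\<tau>. w i * G i x))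
           \<longrightarrow> (\<forall>i\<in>{1..\<tau>}. G i = D (u i) g))"
proof -
  have "prop_P \<tau> g u \<longleftrightarrow> (\<exists>G. shift_expansion \<tau> g u G)"
  proof
    assume "prop_P \<tau> g u"
    then show "\<exists>G. shift_expansion \<tau> g u G"
      by (blast intro: prop_P_imp_shift_expansion_D)
  next
    assume "\<exists>G. shift_expansion \<tau> g u G"
    then obtain G where "shift_expansion \<tau> g u G" ..
    then show "prop_P \<tau> g u"
      using assms(2) shift_expansion_imp_DD_eq_0 unfolding prop_P_def by force
  qed
  then show ?thesis
    using shift_expansion_coeff_eq_D unfolding shift_expansion_def by blast
qed

end
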